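(* In the symmetric second-price sealed-bid auction with $n=2$ bidders and uniform prior $F=\mathrm{Id}$ on $[0,1]$, and for $0<\delta<\frac{9}{100}$, the operator $\beta\mapsto DU(\vec\beta)$ on $\mathcal{B}_\delta$ is neither monotone, nor pseudo-monotone, nor quasi-monotone (in the senses defined in the context).
   Context: $V:=W^{1,1}(0,1)$ (integrable functions with integrable weak derivative on $(0,1)$). For $\delta>0$, $\mathcal{B}_\delta:=\{\beta\in V:0\le\beta\le1 \text{ a.e.},\ \delta\le\beta'\text{ a.e.},\ \beta(0)=0\}$. Two bidders with values i.i.d. uniform on $[0,1]$. Second-price ex-ante utility of bidder 1 bidding $\beta$ against the other bidding $\tilde\beta$: $U(\beta,\tilde\beta)=\int_0^1\int_0^1\chi_{\{\beta(x)>\tilde\beta(y)\}}(x-\tilde\beta(y))\,\mathrm{d}y\,\mathrm{d}x$. For $\beta\in\mathcal{B}_\delta$, $\vec\beta=(\beta,\beta)$ and $DU(\vec\beta)[d]:=\lim_{\varepsilon\to0}\varepsilon^{-1}(U(\beta+\varepsilon d,\beta)-U(\beta,\beta))$ for $d\in V$ (Gateaux derivative with respect to bidder 1's strategy). The operator is monotone if $(DU(\vec{\tilde\beta})-DU(\vec\beta))[\tilde\beta-\beta]\le0$ for all $\beta,\tilde\beta\in\mathcal{B}_\delta$; pseudo-monotone if for all $\beta,\tilde\beta\in\mathcal{B}_\delta$, $DU(\vec\beta)[\tilde\beta-\beta]\le0$ implies $DU(\vec{\tilde\beta})[\tilde\beta-\beta]\le0$; quasi-monotone if for all $\beta,\tilde\beta\in\mathcal{B}_\delta$,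 $DU(\vec\beta)[\tilde\beta-\beta]<0$ implies $DU(\vec{\tilde\beta})[\tilde\beta-\beta]\le0$. *)

theory Defs
  imports "HOL-Analysis.Analysis"
begin

text \<open>Strategies are real functions; only their values on [0,1] matter.
  Elements of W^{1,1}(0,1) are represented by their absolutely continuous
  representative, i.e. beta x = beta 0 + integral from 0 to x of an
  integrable weak derivative g.\<close>

definition strategies :: "real \<Rightarrow> (real \<Rightarrow> real) set" where
  "strategies \<delta> = {\<beta>. \<exists>g.
      set_integrable lborel {0..1} g \<and>
      (\<forall>x\<in>{0..1}. \<beta> x = \<beta> 0 + (LINT t:{0..x}|lborel. g t)) \<and>
      (AE x in lborel. x \<in> {0<..<1} \<longrightarrow> \<delta> \<le> g x) \<and>
      (AE x in lborel. x \<in> {0<..<1} \<longrightarrow> 0 \<le> \<beta> x \<and> \<beta> x \<le> 1) \<and>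
      \<beta> 0 = 0}"

definition U2 :: "(real \<Rightarrow> real) \<Rightarrow> (real \<Rightarrow> real) \<Rightarrow> real" where
  "U2 \<beta> \<beta>t = (LINT x:{0..1}|lborel. (LINT y:{0..1}|lborel.
      (if \<beta> x > \<beta>t y then x - \<beta>t y else 0)))"

definition DU :: "(real \<Rightarrow> real) \<Rightarrow> (real \<Rightarrow> real) \<Rightarrow> real" where
  "DU \<beta> d = Lim (at 0) (\<lambda>\<epsilon>. (U2 (\<lambda>x. \<beta> x + \<epsilon> * d x) \<beta> - U2 \<beta> \<beta>) / \<epsilon>)"

definition DU_monotone :: "real \<Rightarrow> bool" where
  "DU_monotone \<delta> \<longleftrightarrow> (\<forall>\<beta>\<in>strategies \<delta>. \<forall>\<beta>t\<in>strategies \<delta>.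
      DU \<beta>t (\<lambda>x. \<beta>t x - \<beta> x) - DU \<beta> (\<lambda>x. \<beta>t x - \<beta> x) \<le> 0)"

definition DU_pseudo_monotone :: "real \<Rightarrow> bool" where
  "DU_pseudo_monotone \<delta> \<longleftrightarrow> (\<forall>\<beta>\<in>strategies \<delta>. \<forall>\<beta>t\<in>strategies \<delta>.
      DU \<beta> (\<lambda>x. \<beta>t x - \<beta> x) \<le> 0 \<longrightarrow> DU \<beta>t (\<lambda>x. \<beta>t x - \<beta> x) \<le> 0)"

definition DU_quasi_monotone :: "real \<Rightarrow> bool" where
  "DU_quasi_monotone \<delta> \<longleftrightarrow> (\<forall>\<beta>\<in>strategies \<delta>. \<forall>\<beta>t\<in>strategies \<delta>.
      DU \<beta> (\<lambda>x. \<beta>t x - \<beta> x) < 0 \<longrightarrow> DU \<beta>t (\<lambda>x. \<beta>t x - \<beta> x) \<le> 0)"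

end

theory Submission
  imports Defs
begin

text \<open>All three properties fail for one pair of strategies: the linear bid b1 x = 7x/20 and the
  piecewise linear bid b2 with slopes 7/10, 1/10, 3/10 and kinks at 1/4 and 7/10; both have slope at
  least 1/10 > \<delta>. For a bid \<beta> whose slope is bounded below, raising the bid at value x to
  \<beta> x + \<epsilon> d x raises the winning probability by \<epsilon> d x / \<beta>' x to first order, and
  the interim utility by x - \<beta> x times that. Dominated convergence then gives
  DU \<beta> d = \<integral> (x - \<beta> x) d x / \<beta>' x dx over [0,1]. For d = b2 - b1 this is
  -5603/1680000 < 0 at b1 and 551/160000 > 0 at b2.\<close>

section \<open>Integration\<close>

lemma emeasure_lborel_subset_unit_finite:
  assumes "A \<subseteq> {0..1::real}"
  shows "emeasure lborel A < \<infinity>"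
proof -
  have "emeasure lborel A \<le> emeasure lborel {0..1::real}"
    using assms by (intro emeasure_mono) auto
  then show ?thesis
    by (auto simp: top_unique less_top[symmetric])
qed

lemma integrable_indicator_bounded:
  fixes g :: "real \<Rightarrow> real"
  assumes [measurable]: "A \<in> sets borel" "g \<in> borel_measurable borel"
    and "A \<subseteq> {0..1}" and bound: "\<And>y. y \<in> A \<Longrightarrow> \<bar>g y\<bar> \<le> B"
  shows "integrable lborel (\<lambda>y. indicator A y * g y)"
proof (rule integrableI_bounded_set[where A=A and B=B])
  show "emeasure lborel A < \<infinity>"
    using \<open>A \<subseteq> {0..1}\<close> by (rule emeasure_lborel_subset_unit_finite)
qed (use assms(1) bound in \<open>auto simp: indicator_def\<close>)

lemma integral_indicator_deviation:
  fixes g :: "real \<Rightarrow> real"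
  assumes [measurable]: "A \<in> sets borel" "g \<in> borel_measurable borel"
    and A: "A \<subseteq> {0..1}" and close: "\<And>y. y \<in> A \<Longrightarrow> \<bar>g y - a\<bar> \<le> e"
  shows "\<bar>(\<integral>y. indicator A y * g y \<partial>lborel) - a * measure lborel A\<bar> \<le> e * measure lborel A"
proof -
  have fin: "emeasure lborel A < \<infinity>"
    using A by (rule emeasure_lborel_subset_unit_finite)
  have int_dev: "integrable lborel (\<lambda>y. indicator A y * (g y - a))"
    using assms(1) A close by (intro integrable_indicator_bounded) auto
  have int_ind: "integrable lborel (\<lambda>y. c * indicator A y :: real)" for c
    using assms(1) fin by (simp add: integrable_indicator_iff)
  have "(\<integral>y. indicator A y * g y \<partial>lborel) = (\<integral>y. indicator A y * (g y - a) + a * indicator A y \<partial>lborel)"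
    by (rule Bochner_Integration.integral_cong) (auto simp: algebra_simps)
  also have "\<dots> = (\<integral>y. indicator A y * (g y - a) \<partial>lborel) + a * measure lborel A"
    using int_dev int_ind fin by simp
  finally have "\<bar>(\<integral>y. indicator A y * g y \<partial>lborel) - a * measure lborel A\<bar>
      = \<bar>\<integral>y. indicator A y * (g y - a) \<partial>lborel\<bar>"
    by simp
  also have "\<dots> \<le> (\<integral>y. \<bar>indicator A y * (g y - a)\<bar> \<partial>lborel)"
    using integral_norm_bound[of lborel "\<lambda>y. indicator A y * (g y - a)"] by simp
  also have "\<dots> \<le> (\<integral>y. e * indicator A y \<partial>lborel)"
    using close by (intro integral_mono int_ind integrable_abs[OF int_dev]) (auto simp: indicator_def)
  also have "\<dots> = e * measure lborel A"
    using fin by simp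
  finally show ?thesis .
qed

lemma integral_indicator_abs_le:
  fixes g :: "real \<Rightarrow> real"
  assumes "A \<in> sets borel" "g \<in> borel_measurable borel"
    and "A \<subseteq> {0..1}" and "\<And>y. y \<in> A \<Longrightarrow> \<bar>g y\<bar> \<le> e"
  shows "\<bar>\<integral>y. indicator A y * g y \<partial>lborel\<bar> \<le> e * measure lborel A"
  using integral_indicator_deviation[OF assms(1-3), of 0 e] assms(4) by simp

lemma integral_dominated_convergence_at:
  fixes s :: "real \<Rightarrow> 'a \<Rightarrow> real" and f w :: "'a \<Rightarrow> real"
  assumes [measurable]: "f \<in> borel_measurable M" "\<And>t. s t \<in> borel_measurable M"
    and "integrable M w"
    and lim: "AE x in M. ((\<lambda>t. s t x) \<longlongrightarrow> f x) (at a)"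
    and bound: "\<And>t. AE x in M. norm (s t x) \<le> w x"
  shows "integrable M f" and "((\<lambda>t. integral\<^sup>L M (s t)) \<longlongrightarrow> integral\<^sup>L M f) (at a)"
proof -
  have along_sequence: "integrable M f \<and> (\<lambda>i. integral\<^sup>L M (s (X i))) \<longlonglongrightarrow> integral\<^sup>L M f"
    if X: "filterlim X (at a) sequentially" for X
  proof -
    have "AE x in M. (\<lambda>i. s (X i) x) \<longlonglongrightarrow> f x"
      using lim by eventually_elim (rule filterlim_compose[OF _ X])
    note dominated = assms(1,2) \<open>integrable M w\<close> this bound
    show ?thesis
      using integrable_dominated_convergence[OF dominated] integral_dominated_convergence[OF dominated]
      by blast
  qed
  have "(\<lambda>i. a + inverse (real (Suc i))) \<longlonglongrightarrow> a"
    using tendsto_add[OF tendsto_const LIMSEQ_inverse_real_of_nat, of a] by simp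
  then have "filterlim (\<lambda>i. a + inverse (real (Suc i))) (at a) sequentially"
    by (intro filterlim_atI) auto
  then show "integrable M f"
    using along_sequence by blast
  show "((\<lambda>t. integral\<^sup>L M (s t)) \<longlongrightarrow> integral\<^sup>L M f) (at a)"
    unfolding tendsto_at_iff_sequentially comp_def
  proof (intro allI impI)
    fix X :: "nat \<Rightarrow> real"
    assume "\<forall>i. X i \<in> UNIV - {a}" "X \<longlonglongrightarrow> a"
    then have "filterlim X (at a) sequentially"
      by (intro filterlim_atI) auto
    then show "(\<lambda>i. integral\<^sup>L M (s (X i))) \<longlonglongrightarrow> integral\<^sup>L M f"
      using along_sequence by blast
  qed
qed

lemma has_integral_quadratic:
  fixes a b p q r :: real
  assumes "a \<le> b"
  shows "((\<lambda>x. p + q * x + r * x^2) has_integral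
          (p * (b - a) + q * (b^2 - a^2) / 2 + r * (b^3 - a^3) / 3)) {a..b}"
proof -
  define P where "P x = p * x + q * x^2 / 2 + r * x^3 / 3" for x :: real
  have "((\<lambda>x. p + q * x + r * x^2) has_integral (P b - P a)) {a..b}"
  proof (rule fundamental_theorem_of_calculus[OF assms])
    fix x assume "x \<in> {a..b}"
    have "(P has_real_derivative (p + q * x + r * x^2)) (at x within {a..b})"
      unfolding P_def by (auto intro!: derivative_eq_intros simp: power2_eq_square)
    then show "(P has_vector_derivative (p + q * x + r * x^2)) (at x within {a..b})"
      by (simp add: has_real_derivative_iff_has_vector_derivative)
  qed
  moreover have "P b - P a = p * (b - a) + q * (b^2 - a^2) / 2 + r * (b^3 - a^3) / 3"
    unfolding P_def by (simp add: algebra_simps diff_divide_distrib)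
  ultimately show ?thesis
    by simp
qed

lemma has_integral_quadratic_spike:
  fixes f :: "real \<Rightarrow> real"
  assumes "a \<le> b" "finite S" "\<And>x. a \<le> x \<Longrightarrow> x \<le> b \<Longrightarrow> x \<notin> S \<Longrightarrow> f x = p + q * x + r * x^2"
    and "I = p * (b - a) + q * (b^2 - a^2) / 2 + r * (b^3 - a^3) / 3"
  shows "(f has_integral I) {a..b}"
  using has_integral_spike_finite[OF assms(2) _ has_integral_quadratic[OF assms(1), of p q r]] assms(3,4)
  by auto

lemma has_integral_combine3:
  fixes f :: "real \<Rightarrow> real"
  assumes "a \<le> b" "b \<le> c" "c \<le> d"
    and "(f has_integral I1) {a..b}" "(f has_integral I2) {b..c}" "(f has_integral I3) {c..d}"
  shows "(f has_integral (I1 + I2 + I3)) {a..d}"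
proof -
  have "(f has_integral (I1 + I2)) {a..c}"
    by (rule has_integral_combine[OF assms(1,2,4,5)])
  then show ?thesis
    by (rule has_integral_combine[OF order_trans[OF assms(1,2)] assms(3) _ assms(6)])
qed

section \<open>Bids with slope bounded below\<close>

definition win_prob :: "(real \<Rightarrow> real) \<Rightarrow> real \<Rightarrow> real" where
  "win_prob \<beta> c = measure lborel {y\<in>{0..1}. \<beta> y < c}"

definition interim_utility :: "(real \<Rightarrow> real) \<Rightarrow> real \<Rightarrow> real \<Rightarrow> real" where
  "interim_utility \<beta> x c = (LINT y:{0..1}|lborel. (if c > \<beta> y then x - \<beta> y else 0))"

definition bid_band :: "(real \<Rightarrow> real) \<Rightarrow> real \<Rightarrow> real \<Rightarrow> real set" where
  "bid_band \<beta> c c' = {y\<in>{0..1}. c \<le> \<beta> y \<and> \<beta> y < c'}"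

lemma U2_eq_integral_interim_utility:
  "U2 b \<beta> = (\<integral>x. indicator {0..1} x * interim_utility \<beta> x (b x) \<partial>lborel)"
  unfolding U2_def interim_utility_def set_lebesgue_integral_def by simp

lemma interim_utility_measurable:
  assumes [measurable]: "\<beta> \<in> borel_measurable borel" "b \<in> borel_measurable borel"
  shows "(\<lambda>x. interim_utility \<beta> x (b x)) \<in> borel_measurable borel"
  unfolding interim_utility_def set_lebesgue_integral_def by measurable

locale slope_bounded_bid =
  fixes \<beta> :: "real \<Rightarrow> real" and s :: real
  assumes measurable_bid[measurable]: "\<beta> \<in> borel_measurable borel"
    and slope_pos: "0 < s"
    and slope_ge: "\<And>y z. 0 \<le> y \<Longrightarrow> y \<le> z \<Longrightarrow> z \<le> 1 \<Longrightarrow> s * (z - y) \<le> \<beta> z - \<beta> y"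
    and bid_range: "\<And>y. 0 \<le> y \<Longrightarrow> y \<le> 1 \<Longrightarrow> 0 \<le> \<beta> y \<and> \<beta> y \<le> 1"
begin

lemma bid_band_sets[measurable]: "bid_band \<beta> c c' \<in> sets borel"
  unfolding bid_band_def by measurable

lemma bid_less_iff:
  assumes "y \<in> {0..1}" "t \<in> {0..1}"
  shows "\<beta> y < \<beta> t \<longleftrightarrow> y < t"
proof (cases "y < t")
  case True
  have "0 < s * (t - y)"
    using slope_pos True by simp
  then show ?thesis
    using True slope_ge[of y t] assms by auto
next
  case False
  have "0 \<le> s * (y - t)"
    using slope_pos False by simp
  then show ?thesis
    using False slope_ge[of t y] assms by auto
qed

lemma win_prob_bid:
  assumes "t \<in> {0..1}"
  shows "win_prob \<beta> (\<beta> t) = t"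
proof -
  have "{y\<in>{0..1}. \<beta> y < \<beta> t} = {0..<t}"
    using assms bid_less_iff by auto
  then show ?thesis
    using assms by (simp add: win_prob_def)
qed

lemma measure_bid_band_le:
  assumes "c \<le> c'"
  shows "measure lborel (bid_band \<beta> c c') \<le> 2 * (c' - c) / s"
proof (cases "bid_band \<beta> c c' = {}")
  case True
  then show ?thesis
    using assms slope_pos by simp
next
  case False
  then obtain y0 where y0: "y0 \<in> bid_band \<beta> c c'"
    by auto
  define L where "L = (c' - c) / s"
  have "bid_band \<beta> c c' \<subseteq> {y0 - L .. y0 + L}"
  proof
    fix y assume y: "y \<in> bid_band \<beta> c c'"
    have "s * \<bar>y - y0\<bar> \<le> \<bar>\<beta> y - \<beta> y0\<bar>"
    proof (cases "y0 \<le> y")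
      case True
      then show ?thesis
        using y y0 slope_ge[of y0 y] by (simp add: bid_band_def)
    next
      case False
      then show ?thesis
        using y y0 slope_ge[of y y0] by (simp add: bid_band_def)
    qed
    also have "\<dots> \<le> c' - c"
      using y y0 by (auto simp: bid_band_def)
    finally have "\<bar>y - y0\<bar> \<le> L"
      using slope_pos by (simp add: L_def pos_le_divide_eq mult.commute)
    then show "y \<in> {y0 - L .. y0 + L}"
      by (simp add: abs_le_iff)
  qed
  then have "emeasure lborel (bid_band \<beta> c c') \<le> ennreal (2 * L)"
    using emeasure_mono[of "bid_band \<beta> c c'" "{y0 - L .. y0 + L}" lborel]
      assms slope_pos by (simp add: L_def)
  then show ?thesis
    using assms slope_pos by (simp add: measure_def enn2real_leI L_def)
qed

lemma interim_utility_as_integral: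
  "interim_utility \<beta> x c = (\<integral>y. indicator {y\<in>{0..1}. \<beta> y < c} y * (x - \<beta> y) \<partial>lborel)"
  unfolding interim_utility_def set_lebesgue_integral_def
  by (rule Bochner_Integration.integral_cong) (auto simp: indicator_def)

lemma interim_utility_increment:
  assumes "c \<le> c'" and x: "x \<in> {0..1}"
  shows "interim_utility \<beta> x c' - interim_utility \<beta> x c
      = (\<integral>y. indicator (bid_band \<beta> c c') y * (x - \<beta> y) \<partial>lborel)"
    and "win_prob \<beta> c' - win_prob \<beta> c = measure lborel (bid_band \<beta> c c')"
proof -
  define A where "A c = {y\<in>{0..1}. \<beta> y < c}" for c
  have A_sets[measurable]: "A c \<in> sets borel" for c
    unfolding A_def by measurable
  have A_unit: "A c \<subseteq> {0..1}" for c
    unfolding A_def by blast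
  have A_mono: "A c \<subseteq> A c'"
    using \<open>c \<le> c'\<close> unfolding A_def by auto
  have A_diff: "A c' - A c = bid_band \<beta> c c'"
    unfolding A_def bid_band_def by (auto simp: not_less)
  have bound: "\<bar>x - \<beta> y\<bar> \<le> 1" if "y \<in> A c" for c y
    using x bid_range[of y] that unfolding A_def by auto
  have integrable: "integrable lborel (\<lambda>y. indicator (A c) y * (x - \<beta> y))" for c
    by (rule integrable_indicator_bounded[OF A_sets _ A_unit bound]) measurable
  have "interim_utility \<beta> x c' - interim_utility \<beta> x c
      = (\<integral>y. indicator (A c') y * (x - \<beta> y) - indicator (A c) y * (x - \<beta> y) \<partial>lborel)"
    unfolding interim_utility_as_integral A_def[symmetric]
    by (rule Bochner_Integration.integral_diff[OF integrable integrable, symmetric])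
  also have "\<dots> = (\<integral>y. indicator (bid_band \<beta> c c') y * (x - \<beta> y) \<partial>lborel)"
    unfolding A_diff[symmetric] using A_mono
    by (intro Bochner_Integration.integral_cong) (auto simp: indicator_def)
  finally show "interim_utility \<beta> x c' - interim_utility \<beta> x c
      = (\<integral>y. indicator (bid_band \<beta> c c') y * (x - \<beta> y) \<partial>lborel)" .
  have "emeasure lborel (A c') \<noteq> \<infinity>"
    using emeasure_lborel_subset_unit_finite[OF A_unit[of c']] by auto
  then have "measure lborel (A c' - A c) = measure lborel (A c') - measure lborel (A c)"
    by (rule measure_Diff[OF _ _ _ A_mono]) simp_all
  then show "win_prob \<beta> c' - win_prob \<beta> c = measure lborel (bid_band \<beta> c c')"
    unfolding win_prob_def A_def[symmetric] A_diff by simp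
qed

lemma interim_utility_band_estimates:
  assumes "c \<le> c'" and x: "x \<in> {0..1}" and "c \<le> \<beta> x" "\<beta> x \<le> c'"
  defines "\<Delta>U \<equiv> interim_utility \<beta> x c' - interim_utility \<beta> x c"
    and "\<Delta>W \<equiv> win_prob \<beta> c' - win_prob \<beta> c"
  shows "\<bar>\<Delta>U - (x - \<beta> x) * \<Delta>W\<bar> \<le> (c' - c) * \<Delta>W"
    and "\<bar>\<Delta>U\<bar> \<le> \<Delta>W"
    and "0 \<le> \<Delta>W" "\<Delta>W \<le> 2 * (c' - c) / s"
proof -
  note increment = interim_utility_increment[OF \<open>c \<le> c'\<close> x]
  have band: "bid_band \<beta> c c' \<subseteq> {0..1}"
    by (auto simp: bid_band_def)
  have near_bid: "\<bar>(x - \<beta> y) - (x - \<beta> x)\<bar> \<le> c' - c" if "y \<in> bid_band \<beta> c c'" for y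
    using that assms(3,4) by (auto simp: bid_band_def)
  show "\<bar>\<Delta>U - (x - \<beta> x) * \<Delta>W\<bar> \<le> (c' - c) * \<Delta>W"
    unfolding \<Delta>U_def \<Delta>W_def increment
    by (rule integral_indicator_deviation[OF bid_band_sets _ band near_bid]) measurable
  have bounded: "\<bar>x - \<beta> y\<bar> \<le> 1" if "y \<in> bid_band \<beta> c c'" for y
    using that x bid_range[of x] bid_range[of y] by (auto simp: bid_band_def)
  have "\<bar>\<Delta>U\<bar> \<le> 1 * \<Delta>W"
    unfolding \<Delta>U_def \<Delta>W_def increment
    by (rule integral_indicator_abs_le[OF bid_band_sets _ band bounded]) measurable
  then show "\<bar>\<Delta>U\<bar> \<le> \<Delta>W"
    by simp
  show "0 \<le> \<Delta>W" "\<Delta>W \<le> 2 * (c' - c) / s"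
    unfolding \<Delta>W_def increment using measure_bid_band_le[OF \<open>c \<le> c'\<close>] by auto
qed

lemma interim_utility_first_order:
  assumes x: "x \<in> {0..1}"
  shows "\<bar>interim_utility \<beta> x c - interim_utility \<beta> x (\<beta> x) - (x - \<beta> x) * (win_prob \<beta> c - x)\<bar>
      \<le> \<bar>c - \<beta> x\<bar> * \<bar>win_prob \<beta> c - x\<bar>"
    and "\<bar>interim_utility \<beta> x c - interim_utility \<beta> x (\<beta> x)\<bar> \<le> \<bar>win_prob \<beta> c - x\<bar>"
    and "\<bar>win_prob \<beta> c - x\<bar> \<le> 2 * \<bar>c - \<beta> x\<bar> / s"
proof -
  define \<Delta>U where "\<Delta>U = interim_utility \<beta> x c - interim_utility \<beta> x (\<beta> x)"
  define \<Delta>W where "\<Delta>W = win_prob \<beta> c - x"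
  have "win_prob \<beta> (\<beta> x) = x"
    using x by (rule win_prob_bid)
  then have "\<bar>\<Delta>U - (x - \<beta> x) * \<Delta>W\<bar> \<le> \<bar>c - \<beta> x\<bar> * \<bar>\<Delta>W\<bar> \<and> \<bar>\<Delta>U\<bar> \<le> \<bar>\<Delta>W\<bar>
      \<and> \<bar>\<Delta>W\<bar> \<le> 2 * \<bar>c - \<beta> x\<bar> / s"
  proof (cases "\<beta> x \<le> c")
    case True
    note estimates = interim_utility_band_estimates[OF True x order.refl True,
        folded \<Delta>U_def, unfolded \<open>win_prob \<beta> (\<beta> x) = x\<close>, folded \<Delta>W_def]
    have "\<bar>c - \<beta> x\<bar> = c - \<beta> x" "\<bar>\<Delta>W\<bar> = \<Delta>W"
      using True estimates(3) by auto
    then show ?thesis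
      using estimates(1,2,4) by simp
  next
    case False
    then have "c \<le> \<beta> x"
      by simp
    note estimates = interim_utility_band_estimates[OF this x this order.refl, unfolded \<open>win_prob \<beta> (\<beta> x) = x\<close>]
    have "\<bar>c - \<beta> x\<bar> = \<beta> x - c" "\<bar>\<Delta>W\<bar> = x - win_prob \<beta> c"
      "\<bar>\<Delta>U\<bar> = \<bar>interim_utility \<beta> x (\<beta> x) - interim_utility \<beta> x c\<bar>"
      "\<bar>\<Delta>U - (x - \<beta> x) * \<Delta>W\<bar>
        = \<bar>interim_utility \<beta> x (\<beta> x) - interim_utility \<beta> x c - (x - \<beta> x) * (x - win_prob \<beta> c)\<bar>"
      using False estimates(3) unfolding \<Delta>U_def \<Delta>W_def by (auto simp: abs_minus_commute algebra_simps)
    then show ?thesis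
      using False estimates(1,2,4) by simp
  qed
  then show "\<bar>interim_utility \<beta> x c - interim_utility \<beta> x (\<beta> x) - (x - \<beta> x) * (win_prob \<beta> c - x)\<bar>
      \<le> \<bar>c - \<beta> x\<bar> * \<bar>win_prob \<beta> c - x\<bar>"
    and "\<bar>interim_utility \<beta> x c - interim_utility \<beta> x (\<beta> x)\<bar> \<le> \<bar>win_prob \<beta> c - x\<bar>"
    and "\<bar>win_prob \<beta> c - x\<bar> \<le> 2 * \<bar>c - \<beta> x\<bar> / s"
    unfolding \<Delta>U_def \<Delta>W_def by blast+
qed

lemma interim_utility_bounded:
  assumes x: "x \<in> {0..1}"
  shows "\<bar>interim_utility \<beta> x c\<bar> \<le> 1"
proof -
  let ?A = "{y\<in>{0..1}. \<beta> y < c}"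
  have A_sets: "?A \<in> sets borel"
    by measurable
  have A_unit: "?A \<subseteq> {0..1}"
    by auto
  have bounded: "\<bar>x - \<beta> y\<bar> \<le> 1" if "y \<in> ?A" for y
    using that x bid_range[of x] bid_range[of y] by auto
  have "\<bar>interim_utility \<beta> x c\<bar> \<le> 1 * measure lborel ?A"
    unfolding interim_utility_as_integral
    by (rule integral_indicator_abs_le[OF A_sets _ A_unit bounded]) measurable
  also have "\<dots> \<le> 1"
    using emeasure_mono[OF A_unit, of lborel] by (simp add: measure_def enn2real_leI)
  finally show ?thesis .
qed

lemma interim_utility_quotient_bound:
  assumes x: "x \<in> {0..1}"
  shows "\<bar>(interim_utility \<beta> x (\<beta> x + \<epsilon> * e) - interim_utility \<beta> x (\<beta> x)) / \<epsilon>\<bar> \<le> 2 * \<bar>e\<bar> / s"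
proof (cases "\<epsilon> = 0")
  case True
  then show ?thesis
    using slope_pos by simp
next
  case False
  have "\<bar>interim_utility \<beta> x (\<beta> x + \<epsilon> * e) - interim_utility \<beta> x (\<beta> x)\<bar> \<le> 2 * \<bar>\<epsilon> * e\<bar> / s"
    using interim_utility_first_order(2,3)[OF x, of "\<beta> x + \<epsilon> * e"] by simp
  then show ?thesis
    using False slope_pos by (simp add: abs_divide abs_mult divide_le_eq field_simps)
qed

lemma interim_utility_quotient_tendsto:
  assumes x: "x \<in> {0..1}"
    and win_prob_affine: "eventually (\<lambda>\<epsilon>. win_prob \<beta> (\<beta> x + \<epsilon> * e) = x + \<epsilon> * v) (at 0)"
  shows "((\<lambda>\<epsilon>. (interim_utility \<beta> x (\<beta> x + \<epsilon> * e) - interim_utility \<beta> x (\<beta> x)) / \<epsilon>)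
      \<longlongrightarrow> (x - \<beta> x) * v) (at 0)"
proof -
  let ?q = "\<lambda>\<epsilon>. (interim_utility \<beta> x (\<beta> x + \<epsilon> * e) - interim_utility \<beta> x (\<beta> x)) / \<epsilon>"
  have "eventually (\<lambda>\<epsilon>. \<epsilon> \<noteq> 0) (at (0::real))"
    by (simp add: eventually_at_filter)
  with win_prob_affine have "eventually (\<lambda>\<epsilon>. norm (?q \<epsilon> - (x - \<beta> x) * v) \<le> \<bar>\<epsilon>\<bar> * \<bar>e * v\<bar>) (at 0)"
  proof eventually_elim
    case (elim \<epsilon>)
    then have "\<bar>interim_utility \<beta> x (\<beta> x + \<epsilon> * e) - interim_utility \<beta> x (\<beta> x) - (x - \<beta> x) * (\<epsilon> * v)\<bar>
        \<le> \<bar>\<epsilon> * e\<bar> * \<bar>\<epsilon> * v\<bar>"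
      using interim_utility_first_order(1)[OF x, of "\<beta> x + \<epsilon> * e"] by simp
    then show ?case
      using \<open>\<epsilon> \<noteq> 0\<close> by (simp add: abs_mult field_simps abs_divide divide_le_eq)
  qed
  moreover have "((\<lambda>\<epsilon>. \<bar>\<epsilon>\<bar> * \<bar>e * v\<bar>) \<longlongrightarrow> 0) (at (0::real))"
    by (auto intro!: tendsto_eq_intros)
  ultimately have "((\<lambda>\<epsilon>. ?q \<epsilon> - (x - \<beta> x) * v) \<longlongrightarrow> 0) (at 0)"
    by (rule Lim_null_comparison)
  then show ?thesis
    by (simp add: LIM_zero_iff)
qed

lemma win_prob_affine_piece:
  assumes "0 \<le> l" "l < x" "x < r" "r \<le> 1" "\<sigma> \<noteq> 0"
    and affine: "\<And>t. l < t \<Longrightarrow> t < r \<Longrightarrow> \<beta> t = \<beta> x + \<sigma> * (t - x)"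
  shows "eventually (\<lambda>\<epsilon>. win_prob \<beta> (\<beta> x + \<epsilon> * e) = x + \<epsilon> * (e / \<sigma>)) (at 0)"
proof -
  have "((\<lambda>\<epsilon>. x + \<epsilon> * (e / \<sigma>)) \<longlongrightarrow> x) (at 0)"
    using \<open>\<sigma> \<noteq> 0\<close> by (auto intro!: tendsto_eq_intros)
  then have "eventually (\<lambda>\<epsilon>. l < x + \<epsilon> * (e / \<sigma>) \<and> x + \<epsilon> * (e / \<sigma>) < r) (at 0)"
    using assms(2,3) by (intro eventually_conj order_tendstoD)
  then show ?thesis
  proof eventually_elim
    case (elim \<epsilon>)
    then have "\<beta> x + \<epsilon> * e = \<beta> (x + \<epsilon> * (e / \<sigma>))"
      using affine \<open>\<sigma> \<noteq> 0\<close> by simp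
    then show ?case
      using elim assms(1,4) by (simp add: win_prob_bid)
  qed
qed

lemma U2_difference_quotient:
  assumes [measurable]: "d \<in> borel_measurable borel"
  shows "(U2 (\<lambda>x. \<beta> x + \<epsilon> * d x) \<beta> - U2 \<beta> \<beta>) / \<epsilon>
    = (\<integral>x. indicator {0..1} x *
        ((interim_utility \<beta> x (\<beta> x + \<epsilon> * d x) - interim_utility \<beta> x (\<beta> x)) / \<epsilon>) \<partial>lborel)"
proof -
  have integrable: "integrable lborel (\<lambda>x. indicator {0..1} x * interim_utility \<beta> x (b x))"
    if [measurable]: "b \<in> borel_measurable borel" for b
    by (intro integrable_indicator_bounded[where B=1] interim_utility_bounded interim_utility_measurable) auto
  show ?thesis
    unfolding U2_eq_integral_interim_utility
    using integrable[of "\<lambda>x. \<beta> x + \<epsilon> * d x"] integrable[of \<beta>]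
    by (simp flip: Bochner_Integration.integral_diff add: right_diff_distrib)
qed

lemma DU_has_integral:
  fixes d w :: "real \<Rightarrow> real"
  assumes [measurable]: "d \<in> borel_measurable borel" "w \<in> borel_measurable borel"
    and d_bounded: "\<And>y. y \<in> {0..1} \<Longrightarrow> \<bar>d y\<bar> \<le> D"
    and "finite F"
    and win_prob_deriv: "\<And>x. x \<in> {0<..<1} - F \<Longrightarrow>
      eventually (\<lambda>\<epsilon>. win_prob \<beta> (\<beta> x + \<epsilon> * d x) = x + \<epsilon> * w x) (at 0)"
  shows "((\<lambda>x. (x - \<beta> x) * w x) has_integral DU \<beta> d) {0..1}"
proof -
  define q where "q \<epsilon> x = (interim_utility \<beta> x (\<beta> x + \<epsilon> * d x) - interim_utility \<beta> x (\<beta> x)) / \<epsilon>"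
    for \<epsilon> x
  define L where "L = (\<integral>x. indicator {0..1} x * ((x - \<beta> x) * w x) \<partial>lborel)"
  have [measurable]: "q \<epsilon> \<in> borel_measurable borel" for \<epsilon>
    unfolding q_def by (intro borel_measurable_divide borel_measurable_diff interim_utility_measurable) auto
  have "AE x in lborel. x \<notin> {0, 1} \<union> F"
    using \<open>finite F\<close> by (intro AE_not_in countable_imp_null_set_lborel) (simp add: countable_finite)
  then have pointwise: "AE x in lborel.
      ((\<lambda>\<epsilon>. indicator {0..1} x * q \<epsilon> x) \<longlongrightarrow> indicator {0..1} x * ((x - \<beta> x) * w x)) (at 0)"
  proof eventually_elim
    case (elim x)
    then show ?case
      unfolding q_def using win_prob_deriv[of x]
      by (cases "x \<in> {0..1}") (auto intro!: tendsto_mult_left interim_utility_quotient_tendsto)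
  qed
  have "\<bar>q \<epsilon> x\<bar> \<le> 2 * D / s" if "x \<in> {0..1}" for \<epsilon> x
  proof -
    have "\<bar>q \<epsilon> x\<bar> \<le> 2 * \<bar>d x\<bar> / s"
      unfolding q_def by (rule interim_utility_quotient_bound[OF that])
    also have "\<dots> \<le> 2 * D / s"
      using d_bounded[OF that] slope_pos by (simp add: divide_right_mono)
    finally show ?thesis .
  qed
  then have dominated: "AE x in lborel. norm (indicator {0..1} x * q \<epsilon> x) \<le> indicator {0..1} x * (2 * D / s)"
    for \<epsilon>
    by (intro AE_I2) (simp add: indicator_def)
  note convergence = integral_dominated_convergence_at[OF _ _ _ pointwise dominated]
  have "set_integrable lborel {0..1} (\<lambda>x. (x - \<beta> x) * w x)"
    unfolding set_integrable_def using convergence(1) by simp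
  moreover have "((\<lambda>\<epsilon>. (U2 (\<lambda>x. \<beta> x + \<epsilon> * d x) \<beta> - U2 \<beta> \<beta>) / \<epsilon>) \<longlongrightarrow> L) (at 0)"
    unfolding U2_difference_quotient[OF \<open>d \<in> borel_measurable borel\<close>] L_def q_def[symmetric]
    using convergence(2) by simp
  then have "DU \<beta> d = L"
    unfolding DU_def by (intro tendsto_Lim) (auto simp: trivial_limit_at)
  ultimately show ?thesis
    using set_borel_integral_eq_integral[of "{0..1}" "\<lambda>x. (x - \<beta> x) * w x"]
    by (simp add: L_def set_lebesgue_integral_def has_integral_integral)
qed
end

section \<open>The counterexample\<close>

lemma strategiesI:
  fixes g :: "real \<Rightarrow> real"
  assumes [measurable]: "g \<in> borel_measurable borel"
    and g_bounded: "\<And>t. t \<in> {0..1} \<Longrightarrow> \<bar>g t\<bar> \<le> C"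
    and g_ge: "\<And>t. t \<in> {0<..<1} \<Longrightarrow> \<delta> \<le> g t"
    and primitive: "\<And>x. x \<in> {0..1} \<Longrightarrow> \<beta> x = (LINT t:{0..x}|lborel. g t)"
    and range: "\<And>x. x \<in> {0..1} \<Longrightarrow> 0 \<le> \<beta> x \<and> \<beta> x \<le> 1"
  shows "\<beta> \<in> strategies \<delta>"
  unfolding strategies_def
proof (intro CollectI exI[of _ g] conjI)
  show "set_integrable lborel {0..1} g"
    unfolding set_integrable_def using g_bounded by (auto intro!: integrable_indicator_bounded[where B=C])
  have "AE t in lborel. indicator {0} t * g t = 0"
    using AE_lborel_singleton[of 0] by eventually_elim simp
  then show "\<beta> 0 = 0"
    using primitive[of 0] by (simp add: set_lebesgue_integral_def integral_eq_zero_AE)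
  then show "\<forall>x\<in>{0..1}. \<beta> x = \<beta> 0 + (LINT t:{0..x}|lborel. g t)"
    using primitive by simp
  show "AE x in lborel. x \<in> {0<..<1} \<longrightarrow> \<delta> \<le> g x"
    by (intro AE_I2 impI g_ge)
  show "AE x in lborel. x \<in> {0<..<1} \<longrightarrow> 0 \<le> \<beta> x \<and> \<beta> x \<le> 1"
    by (intro AE_I2 impI range) simp
qed

definition b1 :: "real \<Rightarrow> real" where
  "b1 x = 7/20 * x"

definition b2 :: "real \<Rightarrow> real" where
  "b2 x = x/10 + 3/5 * min x (1/4) + 1/5 * max 0 (x - 7/10)"

definition b2' :: "real \<Rightarrow> real" where
  "b2' t = 1/10 + 3/5 * indicator {..<1/4} t + 1/5 * indicator {7/10<..} t"

lemma b2'_measurable[measurable]: "b2' \<in> borel_measurable borel"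
  unfolding b2'_def by measurable

lemma b2'_bounds: "1/10 \<le> b2' t" "b2' t \<le> 1"
  by (simp_all add: b2'_def indicator_def)

lemma b1_measurable[measurable]: "b1 \<in> borel_measurable borel"
  unfolding b1_def by measurable

lemma b2_measurable[measurable]: "b2 \<in> borel_measurable borel"
  unfolding b2_def by measurable

lemma slope_bounded_bid_b1: "slope_bounded_bid b1 (1/10)"
  by unfold_locales (auto simp: b1_def)

lemma slope_bounded_bid_b2: "slope_bounded_bid b2 (1/10)"
proof
  show "1/10 * (z - y) \<le> b2 z - b2 y" if "y \<le> z" for y z
    using that unfolding b2_def by (simp add: min_def max_def)
  show "0 \<le> b2 y \<and> b2 y \<le> 1" if "0 \<le> y" "y \<le> 1" for y
    using that unfolding b2_def min_def max_def by (auto simp: field_simps)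
qed simp_all

lemma integral_b2':
  assumes x: "x \<in> {0..1}"
  shows "(LINT t:{0..x}|lborel. b2' t) = b2 x"
proof -
  define A where "A = (if x < 1/4 then {0..x} else {0..<1/4::real})"
  have A: "A \<in> sets borel" "emeasure lborel A < \<infinity>" "measure lborel A = min x (1/4)"
    using x by (auto simp: A_def)
  have B: "emeasure lborel {7/10<..x} < \<infinity>" "measure lborel {7/10<..x} = max 0 (x - 7/10)"
    by (cases "7/10 \<le> x"; simp)+
  have "(LINT t:{0..x}|lborel. b2' t)
      = (\<integral>t. 1/10 * indicator {0..x} t + 3/5 * indicator A t + 1/5 * indicator {7/10<..x} t \<partial>lborel)"
    unfolding set_lebesgue_integral_def
    by (rule Bochner_Integration.integral_cong) (auto simp: b2'_def A_def indicator_def)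
  also have "\<dots> = b2 x"
    using x A B by (simp add: integrable_indicator_iff b2_def)
  finally show ?thesis .
qed

lemma b2_minus_b1_bounded: "y \<in> {0..1} \<Longrightarrow> \<bar>b2 y - b1 y\<bar> \<le> 1"
  using slope_bounded_bid.bid_range[OF slope_bounded_bid_b1, of y]
    slope_bounded_bid.bid_range[OF slope_bounded_bid_b2, of y] by auto

lemma b1_in_strategies: "\<delta> \<le> 7/20 \<Longrightarrow> b1 \<in> strategies \<delta>"
  by (rule strategiesI[where g="\<lambda>_. 7/20" and C=1])
     (auto simp: b1_def set_integral_const dest: slope_bounded_bid.bid_range[OF slope_bounded_bid_b1])

lemma b2_in_strategies:
  assumes "\<delta> \<le> 1/10"
  shows "b2 \<in> strategies \<delta>"
proof (rule strategiesI[where g=b2' and C=1])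
  show "\<bar>b2' t\<bar> \<le> 1" "\<delta> \<le> b2' t" for t
    using b2'_bounds[of t] assms by auto
  show "b2 x = (LINT t:{0..x}|lborel. b2' t)" if "x \<in> {0..1}" for x
    using integral_b2'[OF that] by simp
  show "0 \<le> b2 x \<and> b2 x \<le> 1" if "x \<in> {0..1}" for x
    using that by (simp add: slope_bounded_bid.bid_range[OF slope_bounded_bid_b2])
qed simp

lemma win_prob_b2_affine:
  assumes x: "x \<in> {0<..<1} - {1/4, 7/10}"
  shows "eventually (\<lambda>\<epsilon>. win_prob b2 (b2 x + \<epsilon> * e) = x + \<epsilon> * (e / b2' x)) (at 0)"
proof -
  consider "x < 1/4" | "1/4 < x" "x < 7/10" | "7/10 < x"
    using x by force
  then show ?thesis
  proof cases
    case 1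
    then have slope: "b2' x = 7/10"
      by (simp add: b2'_def)
    show ?thesis
      unfolding slope using 1 x
      by (intro slope_bounded_bid.win_prob_affine_piece[OF slope_bounded_bid_b2, where l=0 and r="1/4"])
         (auto simp: b2_def min_def max_def field_simps)
  next
    case 2
    then have slope: "b2' x = 1/10"
      by (simp add: b2'_def)
    show ?thesis
      unfolding slope using 2 x
      by (intro slope_bounded_bid.win_prob_affine_piece[OF slope_bounded_bid_b2, where l="1/4" and r="7/10"])
         (auto simp: b2_def min_def max_def field_simps)
  next
    case 3
    then have slope: "b2' x = 3/10"
      by (simp add: b2'_def)
    show ?thesis
      unfolding slope using 3 x
      by (intro slope_bounded_bid.win_prob_affine_piece[OF slope_bounded_bid_b2, where l="7/10" and r=1])
         (auto simp: b2_def min_def max_def field_simps)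
  qed
qed

lemma DU_b1: "DU b1 (\<lambda>x. b2 x - b1 x) = -5603/1680000"
proof -
  let ?f = "\<lambda>x. (x - b1 x) * ((b2 x - b1 x) / (7/20))"
  have "(?f has_integral DU b1 (\<lambda>x. b2 x - b1 x)) {0..1}"
  proof (rule slope_bounded_bid.DU_has_integral[OF slope_bounded_bid_b1, where D=1 and F="{}"])
    show "(\<lambda>x. b2 x - b1 x) \<in> borel_measurable borel"
      by (intro borel_measurable_diff b1_measurable b2_measurable)
    show "(\<lambda>x. (b2 x - b1 x) / (7/20)) \<in> borel_measurable borel"
      by (intro borel_measurable_divide borel_measurable_diff borel_measurable_const b1_measurable b2_measurable)
    show "\<bar>b2 y - b1 y\<bar> \<le> 1" if "y \<in> {0..1}" for y
      using that by (rule b2_minus_b1_bounded)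
    fix x :: real assume "x \<in> {0<..<1} - {}"
    then show "\<forall>\<^sub>F \<epsilon> in at 0. win_prob b1 (b1 x + \<epsilon> * (b2 x - b1 x)) = x + \<epsilon> * ((b2 x - b1 x) / (7/20))"
      by (intro slope_bounded_bid.win_prob_affine_piece[OF slope_bounded_bid_b1, where l=0 and r=1])
         (auto simp: b1_def field_simps)
  qed simp
  moreover have "(?f has_integral (13/3840 + 1989/224000 + (-39/2500))) {0..1}"
  proof (rule has_integral_combine3[where b="1/4" and c="7/10"])
    show "(?f has_integral 13/3840) {0..1/4}"
      by (rule has_integral_quadratic_spike[where S="{}" and p=0 and q=0 and r="13/20"])
         (auto simp: b1_def b2_def min_def max_def power2_eq_square field_simps)
    show "(?f has_integral 1989/224000) {1/4..7/10}"
      by (rule has_integral_quadratic_spike[where S="{}" and p=0 and q="39/140" and r="-13/28"])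
         (auto simp: b1_def b2_def min_def max_def power2_eq_square field_simps)
    show "(?f has_integral (-39/2500)) {7/10..1}"
      by (rule has_integral_quadratic_spike[where S="{}" and p=0 and q="13/700" and r="-13/140"])
         (auto simp: b1_def b2_def min_def max_def power2_eq_square field_simps)
  qed auto
  ultimately have "DU b1 (\<lambda>x. b2 x - b1 x) = 13/3840 + 1989/224000 + (-39/2500)"
    by (rule has_integral_unique)
  then show ?thesis
    by simp
qed

lemma DU_b2: "DU b2 (\<lambda>x. b2 x - b1 x) = 551/160000"
proof -
  let ?f = "\<lambda>x. (x - b2 x) * ((b2 x - b1 x) / b2' x)"
  have "(?f has_integral DU b2 (\<lambda>x. b2 x - b1 x)) {0..1}"
  proof (rule slope_bounded_bid.DU_has_integral[OF slope_bounded_bid_b2, where D=1 and F="{1/4, 7/10}"])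
    show "(\<lambda>x. b2 x - b1 x) \<in> borel_measurable borel"
      by (intro borel_measurable_diff b1_measurable b2_measurable)
    show "(\<lambda>x. (b2 x - b1 x) / b2' x) \<in> borel_measurable borel"
      by (intro borel_measurable_divide borel_measurable_diff b1_measurable b2_measurable b2'_measurable)
    show "\<bar>b2 y - b1 y\<bar> \<le> 1" if "y \<in> {0..1}" for y
      using that by (rule b2_minus_b1_bounded)
    fix x :: real assume "x \<in> {0<..<1} - {1/4, 7/10}"
    then show "\<forall>\<^sub>F \<epsilon> in at 0. win_prob b2 (b2 x + \<epsilon> * (b2 x - b1 x)) = x + \<epsilon> * ((b2 x - b1 x) / b2' x)"
      by (rule win_prob_b2_affine)
  qed simp
  moreover have "(?f has_integral (1/1280 + 351/16000 + (-771/40000))) {0..1}"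
  proof (rule has_integral_combine3[where b="1/4" and c="7/10"])
    show "(?f has_integral 1/1280) {0..1/4}"
      by (rule has_integral_quadratic_spike[where S="{1/4}" and p=0 and q=0 and r="3/20"])
         (auto simp: b1_def b2_def b2'_def min_def max_def power2_eq_square field_simps)
    show "(?f has_integral 351/16000) {1/4..7/10}"
      by (rule has_integral_quadratic_spike[where S="{1/4, 7/10}" and p="-9/40" and q="69/40" and r="-9/4"])
         (auto simp: b1_def b2_def b2'_def min_def max_def power2_eq_square field_simps)
    show "(?f has_integral (-771/40000)) {7/10..1}"
      by (rule has_integral_quadratic_spike[where S="{7/10}" and p="-1/3000" and q="1/40" and r="-7/60"])
         (auto simp: b1_def b2_def b2'_def min_def max_def power2_eq_square field_simps)
  qed auto
  ultimately have "DU b2 (\<lambda>x. b2 x - b1 x) = 1/1280 + 351/16000 + (-771/40000)"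
    by (rule has_integral_unique)
  then show ?thesis
    by simp
qed

theorem proposition1:
  fixes \<delta> :: real
  assumes "0 < \<delta>" and "\<delta> < 9/100"
  shows "\<not> DU_monotone \<delta> \<and> \<not> DU_pseudo_monotone \<delta> \<and> \<not> DU_quasi_monotone \<delta>"
proof -
  have "b1 \<in> strategies \<delta>" "b2 \<in> strategies \<delta>"
    using \<open>\<delta> < 9/100\<close> by (auto intro: b1_in_strategies b2_in_strategies)
  moreover have "DU b1 (\<lambda>x. b2 x - b1 x) < 0" "DU b2 (\<lambda>x. b2 x - b1 x) > 0"
    by (simp_all add: DU_b1 DU_b2)
  ultimately show ?thesis
    unfolding DU_monotone_def DU_pseudo_monotone_def DU_quasi_monotone_def by force
qed

end
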